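(* Let $(S,+)$ be an infinite semigroup with no idempotent element which is left weakly cancellative and right cancellative, and let $\langle x_n\rangle_{n=1}^\infty$ be a sequence in $S$. Then there exists a sum subsystem $\langle y_n\rangle_{n=1}^\infty$ of $\langle x_n\rangle_{n=1}^\infty$ which satisfies uniqueness of finite sums.
   Context: $S$ is left weakly cancellative if for all $a,b\in S$ the set $\{x: a+x=b\}$ is finite; $S$ is right cancellative if for all $a,b$ the set $\{x: x+a=b\}$ has at most one element; $e$ is idempotent if $e+e=e$. $\mathcal{P}_f(\mathbb{N})$ is the set of nonempty finite subsets of $\mathbb{N}=\{1,2,\dots\}$, and $\sum_{n\in H}x_n$ denotes the sum in increasing order of indices. A sequence $\langle y_n\rangle_{n=1}^\infty$ is a sum subsystem of $\langle x_n\rangle_{n=1}^\infty$ if there are $H_n\in\mathcal{P}_f(\mathbb{N})$ with $\max H_n<\min H_{n+1}$ and $y_n=\sum_{t\in H_n}x_t$ for all $n$. A sequence $\langle y_n\rangle_{n=1}^\infty$ satisfies uniqueness of finite sums if for all distinct $H_1,H_2\in\mathcal{P}_f(\mathbb{N})$, $\sum_{n\in H_1}y_n\neq\sum_{n\in H_2}y_n$. *)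

theory Defs
  imports Main
begin

text \<open>Sum of a nonempty list in the given order (left to right); the empty list
  is never used.\<close>
fun lsum :: "'a::semigroup_add list \<Rightarrow> 'a" where
  "lsum [] = undefined"
| "lsum [a] = a"
| "lsum (a # b # xs) = a + lsum (b # xs)"

definition fsum :: "(nat \<Rightarrow> 'a::semigroup_add) \<Rightarrow> nat set \<Rightarrow> 'a" where
  "fsum x H = lsum (map x (sorted_list_of_set H))"

definition Pf :: "nat set set" where
  "Pf = {H. finite H \<and> H \<noteq> {}}"

definition sum_subsystem :: "(nat \<Rightarrow> 'a::semigroup_add) \<Rightarrow> (nat \<Rightarrow> 'a) \<Rightarrow> bool" where
  "sum_subsystem y x \<longleftrightarrow>
     (\<exists>H :: nat \<Rightarrow> nat set. (\<forall>n. H n \<in> Pf) \<and> (\<forall>n. Max (H n) < Min (H (Suc n)))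
        \<and> (\<forall>n. y n = fsum x (H n)))"

definition uniq_fin_sums :: "(nat \<Rightarrow> 'a::semigroup_add) \<Rightarrow> bool" where
  "uniq_fin_sums y \<longleftrightarrow>
     (\<forall>H1\<in>Pf. \<forall>H2\<in>Pf. H1 \<noteq> H2 \<longrightarrow> fsum y H1 \<noteq> fsum y H2)"

end

theory Submission
  imports Defs
begin

text \<open>Cut x into consecutive blocks [c n, c (n+1)) and let y n be the sum of block n.
  Choose each cut point c (n+1) so that y n is neither a finite sum of terms x k with k < c n
  nor a solution z of a + z = b for two such sums a, b. By left weak cancellativity this
  excludes only finitely many values, whereas the block sums starting at c n are pairwise
  distinct: two equal ones would give s + t = s, so all multiples of t would solve s + z = s,
  and a finitely-valued sequence of multiples contains an idempotent. Given two equal finite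
  sums of the y n, their largest indices agree by the choice of the cut points; if one sum is
  the single term y m, the other has the form b + y m = y m, which by right cancellation gives
  b + b = b; otherwise y m cancels on the right and induction applies.\<close>

lemma lsum_append:
  "xs \<noteq> [] \<Longrightarrow> ys \<noteq> [] \<Longrightarrow> lsum (xs @ ys) = lsum xs + lsum ys"
  by (induction xs rule: lsum.induct) (auto simp: add.assoc neq_Nil_conv)

lemma sorted_list_of_set_Un_less:
  fixes A B :: "'a::linorder set"
  assumes "finite A" "finite B" "\<forall>a\<in>A. \<forall>b\<in>B. a < b"
  shows "sorted_list_of_set (A \<union> B) = sorted_list_of_set A @ sorted_list_of_set B"
proof -
  have "A \<inter> B = {}" using assms by auto
  then have "sorted_wrt (<) (sorted_list_of_set A @ sorted_list_of_set B) \<and>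
      set (sorted_list_of_set A @ sorted_list_of_set B) = A \<union> B \<and>
      length (sorted_list_of_set A @ sorted_list_of_set B) = card (A \<union> B)"
    using assms by (simp add: sorted_wrt_append card_Un_disjoint)
  then show ?thesis using assms by (metis finite_UnI sorted_list_of_set_unique)
qed

lemma fsum_Un_less:
  assumes "A \<in> Pf" "B \<in> Pf" "\<forall>a\<in>A. \<forall>b\<in>B. a < b"
  shows "fsum f (A \<union> B) = fsum f A + fsum f B"
  using assms by (simp add: fsum_def Pf_def sorted_list_of_set_Un_less lsum_append)

lemma fsum_singleton [simp]: "fsum f {m} = f m"
  by (simp add: fsum_def)

lemma fsum_insert_greater:
  assumes "A \<in> Pf" "\<forall>a\<in>A. a < b"
  shows "fsum f (insert b A) = fsum f A + f b"
  using fsum_Un_less[OF assms(1), of "{b}"] assms(2) by (simp add: Pf_def)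

lemma Pf_obtain_Max:
  assumes "H \<in> Pf"
  obtains A where "H = insert (Max H) A" "\<forall>a\<in>A. a < Max H" "finite A"
proof
  show "H = insert (Max H) (H - {Max H})" "finite (H - {Max H})"
    using assms Max_in by (auto simp: Pf_def)
  show "\<forall>a\<in>H - {Max H}. a < Max H"
    using assms by (auto simp: Pf_def order.strict_iff_order)
qed

lemma Max_insert_greater:
  fixes b :: "'a::linorder"
  shows "finite A \<Longrightarrow> \<forall>a\<in>A. a < b \<Longrightarrow> Max (insert b A) = b"
  by (rule Max_eqI) auto

text \<open>smul t n is the (n+1)-fold sum of t; there is no zero to give the 0-fold sum a meaning.\<close>
primrec smul :: "'a::semigroup_add \<Rightarrow> nat \<Rightarrow> 'a" where
  "smul t 0 = t"
| "smul t (Suc n) = smul t n + t"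

lemma smul_add: "smul t (m + Suc n) = smul t m + smul t n"
  by (induction n) (simp_all add: add.assoc)

lemma finite_multiples_idempotent:
  assumes "finite (range (smul t))"
  shows "\<exists>n. smul t n + smul t n = smul t n"
proof -
  obtain i j where ij: "i < j" "smul t i = smul t j"
    using assms finite_imageD[of "smul t" UNIV] unfolding inj_def
    by (metis infinite_UNIV_nat linorder_neqE_nat)
  define p where "p = j - i"
  have shift: "smul t (k + p) = smul t k" if "i \<le> k" for k
  proof -
    obtain d where k: "k = i + d" using \<open>i \<le> k\<close> le_Suc_ex by blast
    show ?thesis
    proof (cases d)
      case 0
      then show ?thesis using ij k by (simp add: p_def)
    next
      case (Suc d')
      have "k + p = j + Suc d'" using ij k Suc unfolding p_def by linarith
      then have "smul t (k + p) = smul t (j + Suc d')" by (rule arg_cong)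
      also have "\<dots> = smul t j + smul t d'" by (rule smul_add)
      also have "\<dots> = smul t (i + Suc d')" by (simp only: smul_add ij(2))
      also have "\<dots> = smul t k" using k Suc by simp
      finally show ?thesis .
    qed
  qed
  have period: "smul t (k + q * p) = smul t k" if "i \<le> k" for k q
  proof (induction q)
    case 0
    then show ?case by simp
  next
    case (Suc q)
    have "smul t (k + Suc q * p) = smul t ((k + q * p) + p)" by (simp add: algebra_simps)
    also have "\<dots> = smul t (k + q * p)" using shift \<open>i \<le> k\<close> by simp
    finally show ?case using Suc.IH by simp
  qed
  \<comment> \<open>k is in the periodic range and k + 1 is a multiple of the period, so 2k + 1 and k agree\<close>
  define k where "k = (i + 1) * p - 1"
  have "i + 1 \<le> (i + 1) * p" using ij by (cases p) (simp_all add: p_def)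
  then have k: "i \<le> k" "Suc k = (i + 1) * p"
    by (simp_all add: k_def)
  have "smul t k + smul t k = smul t (k + (i + 1) * p)" using k(2) by (metis smul_add)
  also have "\<dots> = smul t k" using period k(1) by blast
  finally show ?thesis ..
qed

lemma no_right_identity:
  fixes s t :: "'a::semigroup_add"
  assumes noid: "\<forall>e::'a. e + e \<noteq> e"
    and lwc: "\<forall>a b :: 'a. finite {z. a + z = b}"
  shows "s + t \<noteq> s"
proof
  assume st: "s + t = s"
  have "s + smul t n = s" for n
    using st by (induction n) (simp_all add: add.assoc[symmetric])
  then have "range (smul t) \<subseteq> {z. s + z = s}" by auto
  then have "finite (range (smul t))" using lwc finite_subset by blast
  then show False using finite_multiples_idempotent noid by blast
qed

lemma no_left_identity:
  fixes b z :: "'a::semigroup_add"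
  assumes noid: "\<forall>e::'a. e + e \<noteq> e"
    and rc: "\<forall>a b z w :: 'a. z + a = b \<and> w + a = b \<longrightarrow> z = w"
  shows "b + z \<noteq> z"
proof
  assume "b + z = z"
  then have "(b + b) + z = b + z" by (simp add: add.assoc)
  then show False using rc noid by blast
qed

definition fin_sums :: "(nat \<Rightarrow> 'a::semigroup_add) \<Rightarrow> nat \<Rightarrow> 'a set" where
  "fin_sums x n = fsum x ` {H \<in> Pf. H \<subseteq> {..<n}}"

definition left_quotients :: "'a::semigroup_add set \<Rightarrow> 'a set" where
  "left_quotients F = {z. \<exists>a\<in>F. \<exists>b\<in>F. a + z = b}"

lemma finite_fin_sums: "finite (fin_sums x n)"
  unfolding fin_sums_def by (rule finite_imageI, rule finite_subset[of _ "Pow {..<n}"]) auto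

lemma finite_left_quotients:
  fixes F :: "'a::semigroup_add set"
  assumes lwc: "\<forall>a b :: 'a. finite {z. a + z = b}" and "finite F"
  shows "finite (left_quotients F)"
proof -
  have "left_quotients F = (\<Union>a\<in>F. \<Union>b\<in>F. {z. a + z = b})"
    unfolding left_quotients_def by auto
  then show ?thesis using assms by simp
qed

lemma left_quotients_mono: "F \<subseteq> F' \<Longrightarrow> left_quotients F \<subseteq> left_quotients F'"
  unfolding left_quotients_def by blast

lemma fsum_in_fin_sums: "H \<in> Pf \<Longrightarrow> Max H < n \<Longrightarrow> fsum x H \<in> fin_sums x n"
  unfolding fin_sums_def Pf_def by (auto intro: le_less_trans[OF Max_ge])

lemma fsum_neq_if_Max_less:
  assumes new: "y m \<notin> fin_sums y m \<union> left_quotients (fin_sums y m)"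
    and H: "H1 \<in> Pf" "H2 \<in> Pf" "Max H1 < m" "Max H2 = m"
  shows "fsum y H1 \<noteq> fsum y H2"
proof
  assume eq: "fsum y H1 = fsum y H2"
  have H1_sum: "fsum y H1 \<in> fin_sums y m" using H by (simp add: fsum_in_fin_sums)
  obtain A where A: "H2 = insert m A" "\<forall>a\<in>A. a < m" "finite A"
    using Pf_obtain_Max[OF H(2)] unfolding H(4) by blast
  show False
  proof (cases "A = {}")
    case True
    then show False using new H1_sum eq A(1) by simp
  next
    case False
    then have "A \<in> Pf" "Max A < m" using A(2,3) by (simp_all add: Pf_def)
    then have "fsum y A \<in> fin_sums y m" "fsum y A + y m = fsum y H1"
      using A eq by (simp_all add: fsum_in_fin_sums fsum_insert_greater)
    then have "y m \<in> left_quotients (fin_sums y m)"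
      using H1_sum unfolding left_quotients_def by blast
    then show False using new by simp
  qed
qed

lemma fsum_insert_greater_neq:
  fixes y :: "nat \<Rightarrow> 'a::semigroup_add"
  assumes noid: "\<forall>e::'a. e + e \<noteq> e"
    and rc: "\<forall>a b z w :: 'a. z + a = b \<and> w + a = b \<longrightarrow> z = w"
    and "A \<in> Pf" "\<forall>a\<in>A. a < b"
  shows "fsum y (insert b A) \<noteq> y b"
  using no_left_identity[OF noid rc] fsum_insert_greater[OF assms(3,4)] by metis

lemma uniq_fin_sums_if_terms_new:
  fixes y :: "nat \<Rightarrow> 'a::semigroup_add"
  assumes noid: "\<forall>e::'a. e + e \<noteq> e"
    and rc: "\<forall>a b z w :: 'a. z + a = b \<and> w + a = b \<longrightarrow> z = w"
    and new: "\<forall>n. y n \<notin> fin_sums y n \<union> left_quotients (fin_sums y n)"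
  shows "uniq_fin_sums y"
proof -
  have neq: "fsum y H \<noteq> fsum y H'" if "H \<in> Pf" "H' \<in> Pf" "Max H < Max H'" for H H'
    using fsum_neq_if_Max_less[OF new[rule_format] that refl] .
  have "H1 = H2" if "H1 \<in> Pf" "H2 \<in> Pf" "fsum y H1 = fsum y H2" for H1 H2
  proof -
    have "finite H1" using \<open>H1 \<in> Pf\<close> by (simp add: Pf_def)
    then show ?thesis using that
    proof (induction H1 arbitrary: H2 rule: finite_linorder_max_induct)
      case empty
      then show ?case by (simp add: Pf_def)
    next
      case (insert b A)
      have "Max (insert b A) = b" using insert.hyps by (rule Max_insert_greater)
      then have "Max H2 = b"
        using neq[of "insert b A" H2] neq[of H2 "insert b A"] insert.prems
        by (cases "Max H2" b rule: linorder_cases) auto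
      then obtain A2 where A2: "H2 = insert b A2" "\<forall>a\<in>A2. a < b" "finite A2"
        using Pf_obtain_Max[OF insert.prems(2)] by blast
      consider "A = {}" "A2 = {}" | "A = {}" "A2 \<noteq> {}" | "A \<noteq> {}" "A2 = {}"
        | "A \<noteq> {}" "A2 \<noteq> {}" by blast
      then show ?case
      proof cases
        case 1
        then show ?thesis using A2 by simp
      next
        case 2
        then show ?thesis
          using fsum_insert_greater_neq[OF noid rc, of A2 b y] insert A2 by (simp add: Pf_def)
      next
        case 3
        then show ?thesis
          using fsum_insert_greater_neq[OF noid rc, of A b y] insert A2 by (simp add: Pf_def)
      next
        case 4
        then have "A \<in> Pf" "A2 \<in> Pf" using insert A2 by (simp_all add: Pf_def)
        then have "fsum y A + y b = fsum y A2 + y b"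
          using insert A2 by (simp add: fsum_insert_greater)
        then have "fsum y A = fsum y A2" using rc by blast
        then show ?thesis using insert.IH[OF \<open>A \<in> Pf\<close> \<open>A2 \<in> Pf\<close>] A2(1) by simp
      qed
    qed
  qed
  then show ?thesis unfolding uniq_fin_sums_def by blast
qed

lemma block_sums_inj:
  fixes x :: "nat \<Rightarrow> 'a::semigroup_add"
  assumes noid: "\<forall>e::'a. e + e \<noteq> e"
    and lwc: "\<forall>a b :: 'a. finite {z. a + z = b}"
  shows "inj_on (\<lambda>b. fsum x {N..<b}) {N<..}"
proof (rule linorder_inj_onI')
  fix i j assume ij: "i \<in> {N<..}" "j \<in> {N<..}" "i < j"
  have "{N..<j} = {N..<i} \<union> {i..<j}" using ij by auto
  then have "fsum x {N..<j} = fsum x {N..<i} + fsum x {i..<j}"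
    using fsum_Un_less[of "{N..<i}" "{i..<j}" x] ij by (simp add: Pf_def)
  then show "fsum x {N..<i} \<noteq> fsum x {N..<j}"
    using no_right_identity[OF noid lwc] by metis
qed

lemma exists_block_avoiding:
  fixes x :: "nat \<Rightarrow> 'a::semigroup_add"
  assumes noid: "\<forall>e::'a. e + e \<noteq> e"
    and lwc: "\<forall>a b :: 'a. finite {z. a + z = b}"
    and "finite G"
  shows "\<exists>b>N. fsum x {N..<b} \<notin> G"
proof (rule ccontr)
  assume "\<not> ?thesis"
  then have "(\<lambda>b. fsum x {N..<b}) ` {N<..} \<subseteq> G" by auto
  then have "finite ((\<lambda>b. fsum x {N..<b}) ` {N<..})" using \<open>finite G\<close> finite_subset by blast
  then have "finite {N<..}" using finite_imageD block_sums_inj[OF noid lwc] by blast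
  then show False using infinite_Ioi by blast
qed

lemma exists_cut_points:
  fixes x :: "nat \<Rightarrow> 'a::semigroup_add"
  assumes noid: "\<forall>e::'a. e + e \<noteq> e"
    and lwc: "\<forall>a b :: 'a. finite {z. a + z = b}"
    and "\<And>N. finite (G N)"
  obtains c where "strict_mono c" "\<And>n. fsum x {c n..<c (Suc n)} \<notin> G (c n)"
proof -
  have "\<forall>N. \<exists>b>N. fsum x {N..<b} \<notin> G N"
    using exists_block_avoiding[OF noid lwc assms(3)] by blast
  then obtain next_cut where "\<forall>N. next_cut N > N \<and> fsum x {N..<next_cut N} \<notin> G N"
    by metis
  then show ?thesis
    by (intro that[of "\<lambda>n. (next_cut ^^ n) 0"]) (simp_all add: strict_mono_Suc_iff)
qed

lemma blocks_Pf:
  assumes "strict_mono c" "H \<in> Pf"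
  shows "(\<Union>n\<in>H. {c n..<c (Suc n)}) \<in> Pf"
  using assms strict_monoD[OF assms(1), of n "Suc n" for n] by (auto simp: Pf_def)

lemma fsum_blocks:
  assumes c: "strict_mono c" and "H \<in> Pf"
  shows "fsum (\<lambda>n. fsum x {c n..<c (Suc n)}) H = fsum x (\<Union>n\<in>H. {c n..<c (Suc n)})"
proof -
  have "finite H" "H \<noteq> {}" using \<open>H \<in> Pf\<close> by (auto simp: Pf_def)
  then show ?thesis
  proof (induction H rule: finite_linorder_max_induct)
    case empty
    then show ?case by simp
  next
    case (insert b A)
    show ?case
    proof (cases "A = {}")
      case True
      then show ?thesis by simp
    next
      case False
      let ?U = "\<Union>n\<in>A. {c n..<c (Suc n)}"
      have A: "A \<in> Pf" using False insert.hyps(1) by (simp add: Pf_def)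
      have "\<forall>u\<in>?U. \<forall>v\<in>{c b..<c (Suc b)}. u < v"
      proof (intro ballI)
        fix u v assume "u \<in> ?U" "v \<in> {c b..<c (Suc b)}"
        then obtain n where "n \<in> A" "u < c (Suc n)" "c b \<le> v" by auto
        moreover have "c (Suc n) \<le> c b"
          using insert.hyps(2) \<open>n \<in> A\<close> c by (simp add: strict_mono_less_eq Suc_le_eq)
        ultimately show "u < v" by linarith
      qed
      moreover have "{c b..<c (Suc b)} \<in> Pf"
        using blocks_Pf[OF c, of "{b}"] by (simp add: Pf_def)
      ultimately have "fsum x (?U \<union> {c b..<c (Suc b)}) = fsum x ?U + fsum x {c b..<c (Suc b)}"
        using fsum_Un_less blocks_Pf[OF c A] by blast
      then show ?thesis
        using insert False A by (simp add: fsum_insert_greater Un_commute)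
    qed
  qed
qed

lemma fin_sums_blocks_subset:
  assumes c: "strict_mono c"
  shows "fin_sums (\<lambda>n. fsum x {c n..<c (Suc n)}) n \<subseteq> fin_sums x (c n)"
proof
  fix z assume "z \<in> fin_sums (\<lambda>n. fsum x {c n..<c (Suc n)}) n"
  then obtain H where H: "H \<in> Pf" "H \<subseteq> {..<n}" "z = fsum (\<lambda>n. fsum x {c n..<c (Suc n)}) H"
    unfolding fin_sums_def by blast
  have "(\<Union>m\<in>H. {c m..<c (Suc m)}) \<subseteq> {..<c n}"
  proof
    fix k assume "k \<in> (\<Union>m\<in>H. {c m..<c (Suc m)})"
    then obtain m where "m < n" "k < c (Suc m)" using H(2) by auto
    moreover have "c (Suc m) \<le> c n" using \<open>m < n\<close> c by (simp add: strict_mono_less_eq)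
    ultimately show "k \<in> {..<c n}" by simp
  qed
  moreover have "z = fsum x (\<Union>m\<in>H. {c m..<c (Suc m)})" using fsum_blocks[OF c H(1)] H(3) by simp
  ultimately show "z \<in> fin_sums x (c n)"
    using blocks_Pf[OF c H(1)] unfolding fin_sums_def by blast
qed

lemma sum_subsystem_blocks:
  assumes "strict_mono c"
  shows "sum_subsystem (\<lambda>n. fsum x {c n..<c (Suc n)}) x"
  unfolding sum_subsystem_def
proof (intro exI[of _ "\<lambda>n. {c n..<c (Suc n)}"] conjI allI)
  fix n
  have c: "c n < c (Suc n)" "c (Suc n) < c (Suc (Suc n))"
    using assms by (simp_all add: strict_mono_less)
  then show "{c n..<c (Suc n)} \<in> Pf" by (simp add: Pf_def)
  have "Max {c n..<c (Suc n)} < c (Suc n)" using c by simp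
  moreover have "Min {c (Suc n)..<c (Suc (Suc n))} = c (Suc n)" using c by (intro Min_eqI) auto
  ultimately show "Max {c n..<c (Suc n)} < Min {c (Suc n)..<c (Suc (Suc n))}" by simp
qed simp

theorem theorem2p4:
  fixes x :: "nat \<Rightarrow> 'a::semigroup_add"
  assumes "infinite (UNIV :: 'a set)"
    and "\<forall>e::'a. e + e \<noteq> e"
    and "\<forall>a b :: 'a. finite {z. a + z = b}"
    and "\<forall>a b z w :: 'a. z + a = b \<and> w + a = b \<longrightarrow> z = w"
  shows "\<exists>y. sum_subsystem y x \<and> uniq_fin_sums y"
proof -
  define forbidden where "forbidden N = fin_sums x N \<union> left_quotients (fin_sums x N)" for N
  have "finite (forbidden N)" for N
    unfolding forbidden_def using finite_fin_sums finite_left_quotients[OF assms(3)] by blast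
  then obtain c where c: "strict_mono c" "\<And>n. fsum x {c n..<c (Suc n)} \<notin> forbidden (c n)"
    using exists_cut_points[OF assms(2,3)] by blast
  define y where "y n = fsum x {c n..<c (Suc n)}" for n
  have "fin_sums y n \<subseteq> fin_sums x (c n)" for n
    using fin_sums_blocks_subset[OF c(1)] unfolding y_def .
  then have "y n \<notin> fin_sums y n \<union> left_quotients (fin_sums y n)" for n
    using c(2)[of n] left_quotients_mono unfolding forbidden_def y_def by blast
  then have "uniq_fin_sums y" using uniq_fin_sums_if_terms_new assms(2,4) by blast
  moreover have "sum_subsystem y x" using sum_subsystem_blocks[OF c(1)] unfolding y_def .
  ultimately show ?thesis by blast
qed

end
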